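(* Let $\beta>0$, $\beta_a>0$, $\alpha>0$ and $x_a\in[0,1]$, and consider the planar system on $\Gamma=[0,x_a]\times[0,1-x_a]$ \[ \frac{di_a}{dt}=F_a(i_a,i_r)\triangleq \beta(x_a-i_a)(i_a+i_r)-\beta_a(x_a-i_a)i_a-\alpha i_a, \qquad \frac{di_r}{dt}=F_r(i_a,i_r)\triangleq \beta(1-x_a-i_r)(i_a+i_r)-\beta_a(x_a-i_a)i_r-\alpha i_r, \] with initial condition $(i_a(0),i_r(0))\in\Gamma$. Then: (1) The infection-free equilibrium $(0,0)$ is globally asymptotically stable with respect to $\Gamma$ if and only if $\frac{\beta}{\alpha}\le 1+\frac{\beta_a x_a}{\alpha}$. (2) When $\frac{\beta}{\alpha}> 1+\frac{\beta_a x_a}{\alpha}$, there exists a unique interior equilibrium \[ \boldsymbol{i}^*=\Big(x_a\frac{\lambda_+}{\lambda_++\alpha},\;(1-x_a)\frac{\lambda_+}{\lambda_++\alpha}\Big),\qquad \lambda_+\triangleq \beta-\beta_a x_a-\alpha, \] and it is globally asymptotically stable with respect to $\Gamma$.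
   Context: This is the A-SIS model: a population of cyber nodes, a fixed fraction $x_a$ of which are active defenders; $i_a$ (resp. $i_r$) is the fraction of nodes that are infected active defenders (resp. infected non-active nodes), and $i=i_a+i_r$ is the total infected fraction. Let $\mathcal{E}=\{\boldsymbol{i}\in\Gamma: F_a(\boldsymbol{i})=F_r(\boldsymbol{i})=0\}$ be the set of equilibria. An equilibrium $\boldsymbol{i}^*\in\Gamma$ is called globally asymptotically stable with respect to $\Gamma$ if for every initial condition $\boldsymbol{i}_0\in\Gamma\setminus\mathcal{E}$ the solution $\boldsymbol{i}(t)$ converges to $\boldsymbol{i}^*$ as $t\to\infty$. An equilibrium is called interior if it lies in $(0,x_a)\times(0,1-x_a)$. *)

theory Defs
  imports "HOL-Analysis.Analysis"
begin

definition Fa :: "real \<Rightarrow> real \<Rightarrow> real \<Rightarrow> real \<Rightarrow> real \<Rightarrow> real \<Rightarrow> real" where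
  "Fa \<beta> \<beta>a \<alpha> xa ia ir = \<beta> * (xa - ia) * (ia + ir) - \<beta>a * (xa - ia) * ia - \<alpha> * ia"

definition Fr :: "real \<Rightarrow> real \<Rightarrow> real \<Rightarrow> real \<Rightarrow> real \<Rightarrow> real \<Rightarrow> real" where
  "Fr \<beta> \<beta>a \<alpha> xa ia ir = \<beta> * (1 - xa - ir) * (ia + ir) - \<beta>a * (xa - ia) * ir - \<alpha> * ir"

definition Gamma :: "real \<Rightarrow> (real \<times> real) set" where
  "Gamma xa = {0..xa} \<times> {0..1 - xa}"

definition equilibria :: "real \<Rightarrow> real \<Rightarrow> real \<Rightarrow> real \<Rightarrow> (real \<times> real) set" where
  "equilibria \<beta> \<beta>a \<alpha> xa =
     {p \<in> Gamma xa. Fa \<beta> \<beta>a \<alpha> xa (fst p) (snd p) = 0 \<and> Fr \<beta> \<beta>a \<alpha> xa (fst p) (snd p) = 0}"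

definition is_solution :: "real \<Rightarrow> real \<Rightarrow> real \<Rightarrow> real \<Rightarrow> real \<times> real \<Rightarrow> (real \<Rightarrow> real \<times> real) \<Rightarrow> bool" where
  "is_solution \<beta> \<beta>a \<alpha> xa i0 i \<longleftrightarrow> i 0 = i0 \<and>
     (\<forall>t\<ge>0. (i has_vector_derivative
        (Fa \<beta> \<beta>a \<alpha> xa (fst (i t)) (snd (i t)), Fr \<beta> \<beta>a \<alpha> xa (fst (i t)) (snd (i t))))
        (at t within {0..}))"

definition GAS :: "real \<Rightarrow> real \<Rightarrow> real \<Rightarrow> real \<Rightarrow> real \<times> real \<Rightarrow> bool" where
  "GAS \<beta> \<beta>a \<alpha> xa p \<longleftrightarrow> p \<in> equilibria \<beta> \<beta>a \<alpha> xa \<and>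
     (\<forall>i0 \<in> Gamma xa - equilibria \<beta> \<beta>a \<alpha> xa. \<forall>i. is_solution \<beta> \<beta>a \<alpha> xa i0 i \<longrightarrow>
        (i \<longlongrightarrow> p) at_top)"

definition interior_pts :: "real \<Rightarrow> (real \<times> real) set" where
  "interior_pts xa = {0<..<xa} \<times> {0<..<1 - xa}"

end

theory Submission
  imports Defs "HOL-Real_Asymp.Real_Asymp"
begin

text \<open>The imbalance \<open>D = (1 - xa) * ia - xa * ir\<close> satisfies \<open>D' / D = I' / I - \<beta>\<close>, where
  \<open>I = ia + ir\<close>; hence \<open>D = c0 * exp (- \<beta> * t) * I\<close> and every trajectory approaches the ray
  \<open>ia : ir = xa : (1 - xa)\<close> exponentially fast. Substituting this into the equation for \<open>I\<close>
  turns it into a Bernoulli equation: \<open>u = 1 / I\<close> solves the linear equation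
  \<open>u' = (\<lambda>\<^sub>+ + \<alpha>) - \<lambda>\<^sub>+ * u - \<beta>a * c0 * exp (- \<beta> * t)\<close>.
  For \<open>\<lambda>\<^sub>+ > 0\<close> this forces \<open>u \<longlongrightarrow> (\<lambda>\<^sub>+ + \<alpha>) / \<lambda>\<^sub>+\<close>, i.e. convergence to the endemic
  equilibrium. For \<open>\<lambda>\<^sub>+ \<le> 0\<close> the invariance of \<open>\<Gamma>\<close> gives \<open>u \<ge> 1\<close>, hence
  \<open>u' \<ge> \<alpha> - \<beta>a * c0 * exp (- \<beta> * t)\<close>, so \<open>u\<close> grows linearly and \<open>I \<longlongrightarrow> 0\<close>.\<close>

lemma has_vector_derivative_fst:
  "(f has_vector_derivative v) F \<Longrightarrow> ((\<lambda>t. fst (f t)) has_vector_derivative fst v) F"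
  unfolding has_vector_derivative_def by (drule has_derivative_fst) simp

lemma has_vector_derivative_snd:
  "(f has_vector_derivative v) F \<Longrightarrow> ((\<lambda>t. snd (f t)) has_vector_derivative snd v) F"
  unfolding has_vector_derivative_def by (drule has_derivative_snd) simp

lemma DERIV_nonneg_within_imp_le:
  fixes f f' :: "real \<Rightarrow> real"
  assumes "a \<le> b" and "{a..b} \<subseteq> S"
    and "\<And>t. t \<in> {a..b} \<Longrightarrow> (f has_real_derivative f' t) (at t within S)"
    and "\<And>t. t \<in> {a..b} \<Longrightarrow> 0 \<le> f' t"
  shows "f a \<le> f b"
proof -
  have "(f' has_integral (f b - f a)) {a..b}"
  proof (rule fundamental_theorem_of_calculus[OF assms(1)])
    fix t assume t: "t \<in> {a..b}"
    have "(f has_real_derivative f' t) (at t within {a..b})"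
      using assms(3)[OF t] assms(2) by (rule DERIV_subset)
    then show "(f has_vector_derivative f' t) (at t within {a..b})"
      by (simp add: has_real_derivative_iff_has_vector_derivative)
  qed
  from has_integral_nonneg[OF this assms(4)] show ?thesis
    by simp
qed

lemma integrating_factor_le:
  fixes f f' h :: "real \<Rightarrow> real"
  assumes "a \<le> b" and "{a..b} \<subseteq> S"
    and "\<And>t. t \<in> {a..b} \<Longrightarrow> (f has_real_derivative f' t) (at t within S)"
    and "\<And>t. t \<in> {a..b} \<Longrightarrow> 0 \<le> f' t + h t * f t"
    and "continuous_on {a..b} h"
  shows "f a \<le> f b * exp (integral {a..b} h)"
proof -
  define H where "H x = integral {a..x} h" for x
  have "f a * exp (H a) \<le> f b * exp (H b)"
  proof (rule DERIV_nonneg_within_imp_le[OF assms(1) order_refl])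
    fix t assume t: "t \<in> {a..b}"
    have "(H has_real_derivative h t) (at t within {a..b})"
      unfolding H_def by (rule integral_has_real_derivative[OF assms(5) t])
    then show "((\<lambda>x. f x * exp (H x)) has_real_derivative (f' t + h t * f t) * exp (H t))
        (at t within {a..b})"
      using DERIV_subset[OF assms(3)[OF t] assms(2)]
      by (auto intro!: derivative_eq_intros simp: algebra_simps)
    show "0 \<le> (f' t + h t * f t) * exp (H t)"
      using assms(4)[OF t] by simp
  qed
  then show ?thesis
    by (simp add: H_def)
qed

lemma linear_ode_solutions_proportional:
  fixes f g k :: "real \<Rightarrow> real"
  assumes "convex S" and "a \<in> S" and "t \<in> S"
    and "\<And>t. t \<in> S \<Longrightarrow> (f has_real_derivative f t * k t) (at t within S)"
    and "\<And>t. t \<in> S \<Longrightarrow> (g has_real_derivative g t * k t) (at t within S)"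
    and "\<And>t. t \<in> S \<Longrightarrow> g t \<noteq> 0"
  shows "f t = f a / g a * g t"
proof -
  have "\<exists>c. \<forall>x\<in>S. f x / g x = c"
  proof (rule has_field_derivative_zero_constant[OF assms(1)])
    fix x assume x: "x \<in> S"
    show "((\<lambda>x. f x / g x) has_real_derivative 0) (at x within S)"
      using DERIV_divide[OF assms(4)[OF x] assms(5)[OF x] assms(6)[OF x]]
      by (simp add: algebra_simps)
  qed
  then obtain c where "\<forall>x\<in>S. f x / g x = c" ..
  then show ?thesis
    using assms(2,3,6) by (metis nonzero_eq_divide_eq)
qed

definition logistic :: "real \<Rightarrow> real \<Rightarrow> real \<Rightarrow> real" where
  "logistic r K t = K / (1 + exp (- (r * t)))"

lemma logistic_has_derivative:
  assumes "K \<noteq> 0"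
  shows "(logistic r K has_real_derivative r * logistic r K t * (1 - logistic r K t / K))
    (at t within S)"
proof -
  define e where "e = exp (- (r * t))"
  have pos: "1 + e > 0"
    by (simp add: e_def add_pos_pos)
  have "1 - K / (1 + e) / K = 1 - 1 / (1 + e)"
    using assms by simp
  also have "\<dots> = e / (1 + e)"
    using pos by (simp add: field_simps)
  finally have "r * (K / (1 + e)) * (1 - K / (1 + e) / K) = K * (e * r) / (1 + e)\<^sup>2"
    by (simp add: power2_eq_square)
  then have "r * logistic r K t * (1 - logistic r K t / K) = K * (e * r) / (1 + e)\<^sup>2"
    by (simp add: logistic_def e_def)
  moreover have "(logistic r K has_real_derivative K * (e * r) / (1 + e)\<^sup>2) (at t within S)"
    unfolding logistic_def e_def using pos[unfolded e_def]
    by (auto intro!: derivative_eq_intros simp: power2_eq_square)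
  ultimately show ?thesis
    by simp
qed

lemma logistic_tendsto: "0 < r \<Longrightarrow> (logistic r K \<longlongrightarrow> K) at_top"
  unfolding logistic_def by real_asymp

lemma Fa_on_ray:
  "Fa \<beta> \<beta>a \<alpha> xa (xa * s) ((1 - xa) * s) = xa * s * ((\<beta> - \<beta>a * xa) * (1 - s) - \<alpha>)"
  unfolding Fa_def by (simp add: algebra_simps)

lemma Fr_on_ray:
  "Fr \<beta> \<beta>a \<alpha> xa (xa * s) ((1 - xa) * s) = (1 - xa) * s * ((\<beta> - \<beta>a * xa) * (1 - s) - \<alpha>)"
  unfolding Fr_def by (simp add: algebra_simps)

lemma Fa_Fr_imbalance:
  "(1 - xa) * Fa \<beta> \<beta>a \<alpha> xa a r - xa * Fr \<beta> \<beta>a \<alpha> xa a r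
     = - ((1 - xa) * a - xa * r) * (\<beta> * (a + r) + \<beta>a * (xa - a) + \<alpha>)"
  unfolding Fa_def Fr_def by (simp add: algebra_simps)

lemma ray_mem_Gamma:
  assumes "0 \<le> xa" and "xa \<le> 1" and "0 \<le> s" and "s \<le> 1"
  shows "(xa * s, (1 - xa) * s) \<in> Gamma xa"
  using assms by (simp add: Gamma_def mult_left_le)

lemma ray_mem_equilibria_iff:
  assumes "0 \<le> xa" and "xa \<le> 1" and "0 < s" and "s \<le> 1"
  shows "(xa * s, (1 - xa) * s) \<in> equilibria \<beta> \<beta>a \<alpha> xa \<longleftrightarrow> (\<beta> - \<beta>a * xa) * (1 - s) = \<alpha>"
proof -
  have "xa * s \<noteq> 0 \<or> (1 - xa) * s \<noteq> 0"
    using assms(3) by auto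
  then show ?thesis
    using ray_mem_Gamma[OF assms(1,2) _ assms(4)] assms(3)
    by (auto simp: equilibria_def Fa_on_ray Fr_on_ray)
qed

lemma zero_mem_equilibria: "0 \<le> xa \<Longrightarrow> xa \<le> 1 \<Longrightarrow> (0, 0) \<in> equilibria \<beta> \<beta>a \<alpha> xa"
  by (simp add: equilibria_def Gamma_def Fa_def Fr_def)

lemma ray_is_solution:
  assumes "\<And>t. 0 \<le> t \<Longrightarrow>
    (s has_real_derivative s t * ((\<beta> - \<beta>a * xa) * (1 - s t) - \<alpha>)) (at t within {0..})"
  shows "is_solution \<beta> \<beta>a \<alpha> xa (xa * s 0, (1 - xa) * s 0) (\<lambda>t. (xa * s t, (1 - xa) * s t))"
  unfolding is_solution_def
proof (intro conjI allI impI)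
  fix t :: real assume "0 \<le> t"
  note ds = assms[OF this]
  have "((\<lambda>t. (xa * s t, (1 - xa) * s t)) has_vector_derivative
      (xa * (s t * ((\<beta> - \<beta>a * xa) * (1 - s t) - \<alpha>)),
       (1 - xa) * (s t * ((\<beta> - \<beta>a * xa) * (1 - s t) - \<alpha>)))) (at t within {0..})"
    using DERIV_cmult[OF ds, of xa] DERIV_cmult[OF ds, of "1 - xa"]
    by (intro has_vector_derivative_Pair) (simp_all add: has_real_derivative_iff_has_vector_derivative)
  then show "((\<lambda>t. (xa * s t, (1 - xa) * s t)) has_vector_derivative
      (Fa \<beta> \<beta>a \<alpha> xa (fst (xa * s t, (1 - xa) * s t)) (snd (xa * s t, (1 - xa) * s t)),
       Fr \<beta> \<beta>a \<alpha> xa (fst (xa * s t, (1 - xa) * s t)) (snd (xa * s t, (1 - xa) * s t))))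
      (at t within {0..})"
    by (simp add: Fa_on_ray Fr_on_ray mult.assoc)
qed simp

locale asis_trajectory =
  fixes \<beta> \<beta>a \<alpha> xa :: real and i0 :: "real \<times> real" and i :: "real \<Rightarrow> real \<times> real"
  assumes \<beta>_pos: "0 < \<beta>" and \<beta>a_pos: "0 < \<beta>a" and \<alpha>_pos: "0 < \<alpha>"
    and xa_nonneg: "0 \<le> xa" and xa_le_1: "xa \<le> 1"
    and solution: "is_solution \<beta> \<beta>a \<alpha> xa i0 i"
    and start_in_Gamma: "i0 \<in> Gamma xa" and start_nonzero: "i0 \<noteq> (0, 0)"
begin

abbreviation lambda_plus :: real where
  "lambda_plus \<equiv> \<beta> - \<beta>a * xa - \<alpha>"

definition ia :: "real \<Rightarrow> real" where
  "ia t = fst (i t)"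

definition ir :: "real \<Rightarrow> real" where
  "ir t = snd (i t)"

definition I :: "real \<Rightarrow> real" where
  "I t = ia t + ir t"

definition D :: "real \<Rightarrow> real" where
  "D t = (1 - xa) * ia t - xa * ir t"

definition growth :: "real \<Rightarrow> real" where
  "growth t = \<beta> * (1 - I t) - \<beta>a * (xa - ia t) - \<alpha>"

definition c0 :: real where
  "c0 = D 0 / I 0"

lemma growth_eq: "growth t = lambda_plus - (lambda_plus + \<alpha>) * I t + \<beta>a * D t"
  by (simp add: growth_def I_def D_def algebra_simps)

lemma start_bounds: "0 \<le> ia 0" "ia 0 \<le> xa" "0 \<le> ir 0" "ir 0 \<le> 1 - xa"
  using solution start_in_Gamma by (auto simp: is_solution_def Gamma_def ia_def ir_def)

lemma I_start_pos: "0 < I 0"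
proof -
  have "i 0 \<noteq> (0, 0)"
    using solution start_nonzero by (simp add: is_solution_def)
  then have "ia 0 \<noteq> 0 \<or> ir 0 \<noteq> 0"
    by (metis ia_def ir_def prod.collapse)
  then show ?thesis
    using start_bounds unfolding I_def by arith
qed

lemma ia_ir_deriv:
  assumes "0 \<le> t"
  shows "(ia has_real_derivative Fa \<beta> \<beta>a \<alpha> xa (ia t) (ir t)) (at t within {0..})"
    and "(ir has_real_derivative Fr \<beta> \<beta>a \<alpha> xa (ia t) (ir t)) (at t within {0..})"
proof -
  have "(i has_vector_derivative (Fa \<beta> \<beta>a \<alpha> xa (ia t) (ir t), Fr \<beta> \<beta>a \<alpha> xa (ia t) (ir t)))
      (at t within {0..})"
    using solution assms unfolding is_solution_def ia_def ir_def by blast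
  from has_vector_derivative_fst[OF this] has_vector_derivative_snd[OF this] show
    "(ia has_real_derivative Fa \<beta> \<beta>a \<alpha> xa (ia t) (ir t)) (at t within {0..})"
    "(ir has_real_derivative Fr \<beta> \<beta>a \<alpha> xa (ia t) (ir t)) (at t within {0..})"
    by (simp_all add: ia_def[abs_def] ir_def[abs_def] has_real_derivative_iff_has_vector_derivative)
qed

lemma continuous_on_growth: "continuous_on {0..} growth"
proof -
  have "continuous_on {0..} ia" "continuous_on {0..} ir"
    by (rule DERIV_continuous_on, rule ia_ir_deriv, simp)+
  then show ?thesis
    unfolding growth_def[abs_def] I_def by (intro continuous_intros)
qed

lemma I_deriv:
  assumes "0 \<le> t"
  shows "(I has_real_derivative I t * growth t) (at t within {0..})"
proof -
  have "(I has_real_derivative Fa \<beta> \<beta>a \<alpha> xa (ia t) (ir t) + Fr \<beta> \<beta>a \<alpha> xa (ia t) (ir t))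
      (at t within {0..})"
    unfolding I_def[abs_def] by (intro DERIV_add ia_ir_deriv assms)
  moreover have "Fa \<beta> \<beta>a \<alpha> xa (ia t) (ir t) + Fr \<beta> \<beta>a \<alpha> xa (ia t) (ir t) = I t * growth t"
    by (simp add: Fa_def Fr_def growth_def I_def algebra_simps)
  ultimately show ?thesis
    by simp
qed

lemma D_deriv:
  assumes "0 \<le> t"
  shows "(D has_real_derivative D t * (growth t - \<beta>)) (at t within {0..})"
proof -
  have "(D has_real_derivative
      (1 - xa) * Fa \<beta> \<beta>a \<alpha> xa (ia t) (ir t) - xa * Fr \<beta> \<beta>a \<alpha> xa (ia t) (ir t)) (at t within {0..})"
    unfolding D_def[abs_def] by (intro DERIV_diff DERIV_cmult ia_ir_deriv assms)
  moreover have "(1 - xa) * Fa \<beta> \<beta>a \<alpha> xa (ia t) (ir t) - xa * Fr \<beta> \<beta>a \<alpha> xa (ia t) (ir t)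
      = D t * (growth t - \<beta>)"
    unfolding Fa_Fr_imbalance by (simp add: D_def growth_def I_def algebra_simps)
  ultimately show ?thesis
    by simp
qed

lemma I_pos:
  assumes "0 \<le> t"
  shows "0 < I t"
proof -
  have "I 0 \<le> I t * exp (integral {0..t} (\<lambda>s. - growth s))"
  proof (rule integrating_factor_le[where S = "{0..}" and f' = "\<lambda>s. I s * growth s", OF assms])
    show "continuous_on {0..t} (\<lambda>s. - growth s)"
      by (intro continuous_intros continuous_on_subset[OF continuous_on_growth]) auto
  qed (use I_deriv in auto)
  with I_start_pos have "0 < I t * exp (integral {0..t} (\<lambda>s. - growth s))"
    by linarith
  then show ?thesis
    by (simp add: zero_less_mult_iff)
qed

lemma D_eq:
  assumes "0 \<le> t"
  shows "D t = c0 * exp (- (\<beta> * t)) * I t"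
proof -
  have "((\<lambda>s. exp (- (\<beta> * s)) * I s) has_real_derivative exp (- (\<beta> * s)) * I s * (growth s - \<beta>))
      (at s within {0..})" if "0 \<le> s" for s
    using I_deriv[OF that] by (auto intro!: derivative_eq_intros simp: algebra_simps)
  with assms have "D t = D 0 / (exp (- (\<beta> * 0)) * I 0) * (exp (- (\<beta> * t)) * I t)"
    by (intro linear_ode_solutions_proportional[where S = "{0..}" and k = "\<lambda>s. growth s - \<beta>"])
      (auto intro: D_deriv dest: I_pos)
  then show ?thesis
    by (simp add: c0_def)
qed

lemma ia_eq: "0 \<le> t \<Longrightarrow> ia t = I t * (xa + c0 * exp (- (\<beta> * t)))"
  using D_eq[of t] by (simp add: D_def I_def algebra_simps)

lemma ir_eq: "0 \<le> t \<Longrightarrow> ir t = I t * (1 - xa - c0 * exp (- (\<beta> * t)))"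
  using D_eq[of t] by (simp add: D_def I_def algebra_simps)

lemma c0_bounds: "0 \<le> xa + c0" "0 \<le> 1 - xa - c0"
  using ia_eq[of 0] ir_eq[of 0] start_bounds I_start_pos by (simp_all add: zero_le_mult_iff)

lemma ia_nonneg:
  assumes "0 \<le> t"
  shows "0 \<le> ia t"
proof -
  define e where "e = exp (- (\<beta> * t))"
  have "e \<le> 1"
    using assms \<beta>_pos by (simp add: e_def)
  have "xa + c0 * e = (1 - e) * xa + e * (xa + c0)"
    by (simp add: algebra_simps)
  also have "\<dots> \<ge> 0"
    using \<open>e \<le> 1\<close> xa_nonneg c0_bounds by (simp add: e_def)
  finally show ?thesis
    using ia_eq[OF assms] I_pos[OF assms] by (simp add: e_def)
qed

lemma ir_nonneg:
  assumes "0 \<le> t"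
  shows "0 \<le> ir t"
proof -
  define e where "e = exp (- (\<beta> * t))"
  have "e \<le> 1"
    using assms \<beta>_pos by (simp add: e_def)
  have "1 - xa - c0 * e = (1 - e) * (1 - xa) + e * (1 - xa - c0)"
    by (simp add: algebra_simps)
  also have "\<dots> \<ge> 0"
    using \<open>e \<le> 1\<close> xa_le_1 c0_bounds by (simp add: e_def)
  finally show ?thesis
    using ir_eq[OF assms] I_pos[OF assms] by (simp add: e_def)
qed

lemma continuous_on_I: "continuous_on {0..} I"
  using I_deriv by (rule DERIV_continuous_on) simp

lemma ia_le_xa:
  assumes "0 \<le> t"
  shows "ia t \<le> xa"
proof -
  have "xa - ia 0 \<le> (xa - ia t) * exp (integral {0..t} (\<lambda>s. \<beta> * I s - \<beta>a * ia s))"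
  proof (rule integrating_factor_le[where S = "{0..}" and f' = "\<lambda>s. - Fa \<beta> \<beta>a \<alpha> xa (ia s) (ir s)",
        OF assms])
    fix s assume "s \<in> {0..t}"
    then show "((\<lambda>s. xa - ia s) has_real_derivative - Fa \<beta> \<beta>a \<alpha> xa (ia s) (ir s)) (at s within {0..})"
      using ia_ir_deriv(1)[of s] by (auto intro!: derivative_eq_intros)
    show "0 \<le> - Fa \<beta> \<beta>a \<alpha> xa (ia s) (ir s) + (\<beta> * I s - \<beta>a * ia s) * (xa - ia s)"
      using ia_nonneg[of s] \<open>s \<in> {0..t}\<close> \<alpha>_pos by (simp add: Fa_def I_def algebra_simps)
  qed (auto intro!: continuous_intros continuous_on_subset[OF continuous_on_I]
      continuous_on_subset[OF DERIV_continuous_on[OF ia_ir_deriv(1)]])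
  with start_bounds have "0 \<le> (xa - ia t) * exp (integral {0..t} (\<lambda>s. \<beta> * I s - \<beta>a * ia s))"
    by linarith
  then show ?thesis
    by (simp add: zero_le_mult_iff)
qed

lemma ir_le:
  assumes "0 \<le> t"
  shows "ir t \<le> 1 - xa"
proof -
  have "1 - xa - ir 0 \<le> (1 - xa - ir t) * exp (integral {0..t} (\<lambda>s. \<beta> * I s))"
  proof (rule integrating_factor_le[where S = "{0..}" and f' = "\<lambda>s. - Fr \<beta> \<beta>a \<alpha> xa (ia s) (ir s)",
        OF assms])
    fix s assume "s \<in> {0..t}"
    then show "((\<lambda>s. 1 - xa - ir s) has_real_derivative - Fr \<beta> \<beta>a \<alpha> xa (ia s) (ir s))
        (at s within {0..})"
      using ia_ir_deriv(2)[of s] by (auto intro!: derivative_eq_intros)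
    have "- Fr \<beta> \<beta>a \<alpha> xa (ia s) (ir s) + \<beta> * I s * (1 - xa - ir s) = (\<beta>a * (xa - ia s) + \<alpha>) * ir s"
      by (simp add: Fr_def I_def algebra_simps)
    also have "\<dots> \<ge> 0"
      using ia_le_xa[of s] ir_nonneg[of s] \<open>s \<in> {0..t}\<close> \<beta>a_pos \<alpha>_pos by simp
    finally show "0 \<le> - Fr \<beta> \<beta>a \<alpha> xa (ia s) (ir s) + \<beta> * I s * (1 - xa - ir s)" .
  qed (auto intro!: continuous_intros continuous_on_subset[OF continuous_on_I])
  with start_bounds have "0 \<le> (1 - xa - ir t) * exp (integral {0..t} (\<lambda>s. \<beta> * I s))"
    by linarith
  then show ?thesis
    by (simp add: zero_le_mult_iff)
qed

lemma I_le_1: "0 \<le> t \<Longrightarrow> I t \<le> 1"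
  using ia_le_xa[of t] ir_le[of t] by (simp add: I_def)

lemma inverse_I_deriv:
  assumes "0 \<le> t"
  shows "((\<lambda>t. 1 / I t) has_real_derivative
    (lambda_plus + \<alpha>) - lambda_plus / I t - \<beta>a * c0 * exp (- (\<beta> * t))) (at t within {0..})"
proof -
  have "((\<lambda>t. 1 / I t) has_real_derivative (0 * I t - 1 * (I t * growth t)) / (I t * I t))
      (at t within {0..})"
    by (rule DERIV_divide[OF DERIV_const I_deriv[OF assms]]) (use I_pos[OF assms] in simp)
  moreover have "(0 * I t - 1 * (I t * growth t)) / (I t * I t)
      = (lambda_plus + \<alpha>) - lambda_plus / I t - \<beta>a * c0 * exp (- (\<beta> * t))"
    using I_pos[OF assms] by (simp add: growth_eq D_eq[OF assms] field_simps)
  ultimately show ?thesis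
    by simp
qed

lemma inverse_I_at_top:
  assumes "lambda_plus \<le> 0"
  shows "filterlim (\<lambda>t. 1 / I t) at_top at_top"
proof -
  define u where "u t = 1 / I t" for t
  define v where "v t = u t - \<alpha> * t - \<beta>a * c0 * exp (- (\<beta> * t)) / \<beta>" for t
  have v_mono: "v 0 \<le> v t" if "0 \<le> t" for t
  proof (rule DERIV_nonneg_within_imp_le[where S = "{0..}" and f' = "\<lambda>s. lambda_plus * (1 - u s)",
        OF that])
    fix s assume s: "s \<in> {0..t}"
    have "(u has_real_derivative (lambda_plus + \<alpha>) - lambda_plus * u s - \<beta>a * c0 * exp (- (\<beta> * s)))
        (at s within {0..})"
      using inverse_I_deriv[of s] s by (simp add: u_def[abs_def] u_def divide_inverse)
    then show "(v has_real_derivative lambda_plus * (1 - u s)) (at s within {0..})"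
      unfolding v_def[abs_def] using \<beta>_pos by (auto intro!: derivative_eq_intros simp: algebra_simps)
    have "1 \<le> u s"
      using I_pos[of s] I_le_1[of s] s by (simp add: u_def)
    then show "0 \<le> lambda_plus * (1 - u s)"
      using assms by (simp add: mult_nonpos_nonpos)
  qed auto
  have "\<forall>\<^sub>F t in at_top. v 0 + \<alpha> * t + \<beta>a * c0 * exp (- (\<beta> * t)) / \<beta> \<le> 1 / I t"
    using eventually_ge_at_top[of 0]
  proof eventually_elim
    case (elim t)
    with v_mono[OF elim] show ?case
      unfolding v_def u_def by linarith
  qed
  moreover have "filterlim (\<lambda>t. c + \<alpha> * t + d * exp (- (\<beta> * t)) / \<beta>) at_top at_top" for c d
    using \<alpha>_pos \<beta>_pos by real_asymp
  ultimately show ?thesis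
    by (rule filterlim_at_top_mono[rotated])
qed

text \<open>Subtracting from \<open>1 / I\<close> its equilibrium value and the particular solution
  \<open>K * exp (- \<beta> * t)\<close> of the linear equation in \<open>inverse_I_deriv\<close> leaves a solution
  of \<open>y' = - lambda_plus * y\<close>.\<close>

lemma inverse_I_tendsto:
  assumes "0 < lambda_plus"
  shows "((\<lambda>t. 1 / I t) \<longlongrightarrow> (lambda_plus + \<alpha>) / lambda_plus) at_top"
proof -
  define K where "K = \<beta>a * c0 / (\<beta> - lambda_plus)"
  define u where "u t = 1 / I t" for t
  define y where "y t = u t - (lambda_plus + \<alpha>) / lambda_plus - K * exp (- (\<beta> * t))" for t
  have "\<beta> - lambda_plus > 0"
    using \<beta>a_pos xa_nonneg \<alpha>_pos by (simp add: add_nonneg_pos)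
  then have K_eq: "K * (\<beta> - lambda_plus) = \<beta>a * c0"
    by (simp add: K_def)
  have dy: "(y has_real_derivative y t * (- lambda_plus)) (at t within {0..})" if "0 \<le> t" for t
  proof -
    have "(u has_real_derivative (lambda_plus + \<alpha>) - lambda_plus / I t - \<beta>a * c0 * exp (- (\<beta> * t)))
        (at t within {0..})"
      using inverse_I_deriv[OF that] by (simp add: u_def[abs_def])
    then have "(y has_real_derivative ((lambda_plus + \<alpha>) - lambda_plus / I t - \<beta>a * c0 * exp (- (\<beta> * t)))
        - K * (exp (- (\<beta> * t)) * (- \<beta>))) (at t within {0..})"
      unfolding y_def[abs_def] by (auto intro!: derivative_eq_intros)
    moreover have "((lambda_plus + \<alpha>) - lambda_plus / I t - \<beta>a * c0 * exp (- (\<beta> * t)))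
        - K * (exp (- (\<beta> * t)) * (- \<beta>)) = y t * (- lambda_plus)"
    proof -
      have alg: "(l + \<alpha>) - l / J - b * e - K * (e * (- \<beta>)) = (1 / J - (l + \<alpha>) / l - K * e) * (- l)"
        if "l \<noteq> 0" "J \<noteq> 0" "K * (\<beta> - l) = b" for l J e b
        using that by (simp add: field_simps flip: that(3))
      show ?thesis
        unfolding y_def u_def
        by (rule alg[where l = lambda_plus and J = "I t" and b = "\<beta>a * c0"])
          (use assms K_eq I_pos[OF that] in auto)
    qed
    ultimately show ?thesis
      by simp
  qed
  have "\<forall>\<^sub>F t in at_top.
      (lambda_plus + \<alpha>) / lambda_plus + K * exp (- (\<beta> * t)) + y 0 * exp (- (lambda_plus * t)) = 1 / I t"
    using eventually_ge_at_top[of 0]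
  proof eventually_elim
    case (elim t)
    have "y t = y 0 / exp (- (lambda_plus * 0)) * exp (- (lambda_plus * t))"
      using elim dy
      by (intro linear_ode_solutions_proportional[where S = "{0..}" and k = "\<lambda>_. - lambda_plus"])
        (auto intro!: derivative_eq_intros)
    then show ?case
      by (simp add: y_def u_def)
  qed
  moreover have "((\<lambda>t. c + K * exp (- (\<beta> * t)) + y0 * exp (- (r * t))) \<longlongrightarrow> c) at_top"
    if "0 < r" for c y0 r
    using that \<beta>_pos by real_asymp
  ultimately show ?thesis
    using assms by (blast intro: Lim_transform_eventually)
qed

lemma I_tendsto_0: "lambda_plus \<le> 0 \<Longrightarrow> (I \<longlongrightarrow> 0) at_top"
  using tendsto_inverse_0_at_top[OF inverse_I_at_top] by simp

lemma I_tendsto_endemic: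
  assumes "0 < lambda_plus"
  shows "(I \<longlongrightarrow> lambda_plus / (lambda_plus + \<alpha>)) at_top"
proof -
  have "((\<lambda>t. inverse (1 / I t)) \<longlongrightarrow> inverse ((lambda_plus + \<alpha>) / lambda_plus)) at_top"
    using assms \<alpha>_pos by (intro tendsto_inverse inverse_I_tendsto) auto
  then show ?thesis
    by simp
qed

lemma trajectory_tendsto:
  assumes "(I \<longlongrightarrow> L) at_top"
  shows "(i \<longlongrightarrow> (xa * L, (1 - xa) * L)) at_top"
proof -
  have "((\<lambda>t. exp (- (\<beta> * t))) \<longlongrightarrow> 0) at_top"
    using \<beta>_pos by real_asymp
  then have "((\<lambda>t. (I t * (xa + c0 * exp (- (\<beta> * t))), I t * (1 - xa - c0 * exp (- (\<beta> * t)))))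
      \<longlongrightarrow> (L * (xa + c0 * 0), L * (1 - xa - c0 * 0))) at_top"
    by (intro tendsto_intros assms)
  moreover have "\<forall>\<^sub>F t in at_top.
      (I t * (xa + c0 * exp (- (\<beta> * t))), I t * (1 - xa - c0 * exp (- (\<beta> * t)))) = i t"
    using eventually_ge_at_top[of 0]
    by eventually_elim (simp add: prod_eq_iff ia_eq ir_eq flip: ia_def ir_def)
  ultimately show ?thesis
    by (simp add: Lim_transform_eventually mult.commute)
qed

end

lemma asis_trajectoryI:
  assumes "0 < \<beta>" and "0 < \<beta>a" and "0 < \<alpha>" and "0 \<le> xa" and "xa \<le> 1"
    and "i0 \<in> Gamma xa - equilibria \<beta> \<beta>a \<alpha> xa" and "is_solution \<beta> \<beta>a \<alpha> xa i0 i"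
  shows "asis_trajectory \<beta> \<beta>a \<alpha> xa i0 i"
  using assms zero_mem_equilibria[of xa \<beta> \<beta>a \<alpha>] by unfold_locales auto

lemma GAS_disease_free:
  assumes "0 < \<beta>" and "0 < \<beta>a" and "0 < \<alpha>" and "0 \<le> xa" and "xa \<le> 1"
    and "\<beta> - \<beta>a * xa - \<alpha> \<le> 0"
  shows "GAS \<beta> \<beta>a \<alpha> xa (0, 0)"
  unfolding GAS_def
proof (intro conjI ballI allI impI zero_mem_equilibria)
  fix i0 i
  assume "i0 \<in> Gamma xa - equilibria \<beta> \<beta>a \<alpha> xa" and "is_solution \<beta> \<beta>a \<alpha> xa i0 i"
  then interpret asis_trajectory \<beta> \<beta>a \<alpha> xa i0 i
    using assms by (intro asis_trajectoryI)
  show "(i \<longlongrightarrow> (0, 0)) at_top"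
    using trajectory_tendsto[OF I_tendsto_0[OF assms(6)]] by simp
qed (use assms in auto)

lemma endemic_mem_equilibria:
  assumes "0 < \<alpha>" and "0 \<le> xa" and "xa \<le> 1" and "0 < \<beta> - \<beta>a * xa - \<alpha>"
  defines "K \<equiv> (\<beta> - \<beta>a * xa - \<alpha>) / (\<beta> - \<beta>a * xa - \<alpha> + \<alpha>)"
  shows "(xa * K, (1 - xa) * K) \<in> equilibria \<beta> \<beta>a \<alpha> xa"
  using assms by (subst ray_mem_equilibria_iff) (simp_all add: K_def field_simps)

lemma GAS_endemic:
  assumes "0 < \<beta>" and "0 < \<beta>a" and "0 < \<alpha>" and "0 \<le> xa" and "xa \<le> 1"
    and "0 < \<beta> - \<beta>a * xa - \<alpha>"
  defines "K \<equiv> (\<beta> - \<beta>a * xa - \<alpha>) / (\<beta> - \<beta>a * xa - \<alpha> + \<alpha>)"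
  shows "GAS \<beta> \<beta>a \<alpha> xa (xa * K, (1 - xa) * K)"
  unfolding GAS_def
proof (intro conjI ballI allI impI)
  show "(xa * K, (1 - xa) * K) \<in> equilibria \<beta> \<beta>a \<alpha> xa"
    unfolding K_def using assms by (intro endemic_mem_equilibria)
  fix i0 i
  assume "i0 \<in> Gamma xa - equilibria \<beta> \<beta>a \<alpha> xa" and "is_solution \<beta> \<beta>a \<alpha> xa i0 i"
  then interpret asis_trajectory \<beta> \<beta>a \<alpha> xa i0 i
    using assms by (intro asis_trajectoryI)
  show "(i \<longlongrightarrow> (xa * K, (1 - xa) * K)) at_top"
    unfolding K_def using trajectory_tendsto[OF I_tendsto_endemic[OF assms(6)]] .
qed

text \<open>Above threshold, a logistic motion along the ray through the endemic equilibrium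
  is a solution that does not tend to \<open>(0, 0)\<close>.\<close>

lemma disease_free_not_GAS:
  assumes "0 < \<beta>" and "0 < \<beta>a" and "0 < \<alpha>" and "0 \<le> xa" and "xa \<le> 1"
    and "0 < \<beta> - \<beta>a * xa - \<alpha>"
  shows "\<not> GAS \<beta> \<beta>a \<alpha> xa (0, 0)"
proof
  assume GAS: "GAS \<beta> \<beta>a \<alpha> xa (0, 0)"
  define l where "l = \<beta> - \<beta>a * xa - \<alpha>"
  define K where "K = l / (l + \<alpha>)"
  have K: "0 < K" "K < 1"
    unfolding K_def l_def using assms by auto
  define s where "s = logistic l K"
  have "(s has_real_derivative s t * ((\<beta> - \<beta>a * xa) * (1 - s t) - \<alpha>)) (at t within {0..})" for t
  proof -
    have eq: "l * s t * (1 - s t / K) = s t * ((\<beta> - \<beta>a * xa) * (1 - s t) - \<alpha>)"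
      using assms(6) \<open>0 < \<alpha>\<close> by (simp add: K_def l_def field_simps)
    have "(s has_real_derivative l * s t * (1 - s t / K)) (at t within {0..})"
      unfolding s_def using K by (intro logistic_has_derivative) simp
    then show ?thesis
      unfolding eq .
  qed
  then have sol: "is_solution \<beta> \<beta>a \<alpha> xa (xa * (K / 2), (1 - xa) * (K / 2))
      (\<lambda>t. (xa * s t, (1 - xa) * s t))"
    using ray_is_solution by (fastforce simp: s_def logistic_def)
  have "(\<beta> - \<beta>a * xa) * (1 - K / 2) = \<alpha> + l / 2"
    using assms(3,6) by (simp add: K_def l_def field_simps)
  then have "(xa * (K / 2), (1 - xa) * (K / 2)) \<notin> equilibria \<beta> \<beta>a \<alpha> xa"
    using ray_mem_equilibria_iff[of xa "K / 2"] K assms(4-6) by (simp add: l_def)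
  moreover have "(xa * (K / 2), (1 - xa) * (K / 2)) \<in> Gamma xa"
    using ray_mem_Gamma[of xa "K / 2"] K assms(4,5) by simp
  ultimately have "(xa * (K / 2), (1 - xa) * (K / 2)) \<in> Gamma xa - equilibria \<beta> \<beta>a \<alpha> xa"
    by blast
  with GAS sol have "((\<lambda>t. (xa * s t, (1 - xa) * s t)) \<longlongrightarrow> (0, 0)) at_top"
    unfolding GAS_def by blast
  moreover have "((\<lambda>t. (xa * s t, (1 - xa) * s t)) \<longlongrightarrow> (xa * K, (1 - xa) * K)) at_top"
    using logistic_tendsto[of l K] assms(6) by (auto simp: s_def l_def intro!: tendsto_intros)
  ultimately have "(0, 0) = (xa * K, (1 - xa) * K)"
    by (rule tendsto_unique[OF trivial_limit_at_top_linorder])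
  then show False
    using K by auto
qed

lemma interior_equilibrium_iff:
  assumes "0 < \<beta>" and "0 < \<beta>a" and "0 < \<alpha>" and "0 < xa" and "xa < 1"
    and "0 < \<beta> - \<beta>a * xa - \<alpha>" and "q \<in> interior_pts xa"
  defines "K \<equiv> (\<beta> - \<beta>a * xa - \<alpha>) / (\<beta> - \<beta>a * xa - \<alpha> + \<alpha>)"
  shows "q \<in> equilibria \<beta> \<beta>a \<alpha> xa \<longleftrightarrow> q = (xa * K, (1 - xa) * K)"
proof
  assume eq: "q \<in> equilibria \<beta> \<beta>a \<alpha> xa"
  obtain a r where q: "q = (a, r)" and a: "0 < a" "a < xa" and r: "0 < r" "r < 1 - xa"
    using assms(7) by (cases q) (auto simp: interior_pts_def)
  have "(1 - xa) * Fa \<beta> \<beta>a \<alpha> xa a r - xa * Fr \<beta> \<beta>a \<alpha> xa a r = 0"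
    using eq by (simp add: q equilibria_def)
  moreover have "0 < \<beta> * (a + r) + \<beta>a * (xa - a) + \<alpha>"
    using assms(1-3) a r by (intro add_pos_pos) auto
  ultimately have "(1 - xa) * a - xa * r = 0"
    unfolding Fa_Fr_imbalance by simp
  then have ray: "q = (xa * (a + r), (1 - xa) * (a + r))"
    by (simp add: q algebra_simps)
  with eq have "(\<beta> - \<beta>a * xa) * (1 - (a + r)) = \<alpha>"
    using ray_mem_equilibria_iff[of xa "a + r"] assms(4,5) a r by auto
  then have "a + r = K"
    using assms(3,6) by (simp add: K_def field_simps)
  with ray show "q = (xa * K, (1 - xa) * K)"
    by simp
next
  assume "q = (xa * K, (1 - xa) * K)"
  then show "q \<in> equilibria \<beta> \<beta>a \<alpha> xa"
    using endemic_mem_equilibria[OF assms(3) _ _ assms(6)] assms(4,5) unfolding K_def by simp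
qed

theorem theorem2:
  fixes \<beta> \<beta>a \<alpha> xa :: real
  assumes "\<beta> > 0" and "\<beta>a > 0" and "\<alpha> > 0" and "0 \<le> xa" and "xa \<le> 1"
  shows "(GAS \<beta> \<beta>a \<alpha> xa (0, 0) \<longleftrightarrow> \<beta> / \<alpha> \<le> 1 + \<beta>a * xa / \<alpha>)
    \<and> (\<beta> / \<alpha> > 1 + \<beta>a * xa / \<alpha> \<longrightarrow> 0 < xa \<longrightarrow> xa < 1 \<longrightarrow>
          (let lp = \<beta> - \<beta>a * xa - \<alpha>;
               p = (xa * (lp / (lp + \<alpha>)), (1 - xa) * (lp / (lp + \<alpha>)))
           in (\<forall>q \<in> interior_pts xa. q \<in> equilibria \<beta> \<beta>a \<alpha> xa \<longleftrightarrow> q = p)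
              \<and> p \<in> interior_pts xa \<and> GAS \<beta> \<beta>a \<alpha> xa p))"
proof -
  have threshold: "\<beta> / \<alpha> \<le> 1 + \<beta>a * xa / \<alpha> \<longleftrightarrow> \<beta> - \<beta>a * xa - \<alpha> \<le> 0"
    using assms(3) by (simp add: field_simps)
  have "GAS \<beta> \<beta>a \<alpha> xa (0, 0) \<longleftrightarrow> \<beta> - \<beta>a * xa - \<alpha> \<le> 0"
    using GAS_disease_free[OF assms] disease_free_not_GAS[OF assms] by fastforce
  moreover have "(xa * K, (1 - xa) * K) \<in> interior_pts xa"
    if "0 < \<beta> - \<beta>a * xa - \<alpha>" "0 < xa" "xa < 1"
      and "K = (\<beta> - \<beta>a * xa - \<alpha>) / (\<beta> - \<beta>a * xa - \<alpha> + \<alpha>)" for K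
  proof -
    have "0 < K" "K < 1"
      using assms(3) that(1,4) by auto
    then show ?thesis
      using that(2,3) by (simp add: interior_pts_def mult_less_cancel_left1)
  qed
  ultimately show ?thesis
    using threshold interior_equilibrium_iff[OF assms(1-3)] GAS_endemic[OF assms]
    by (auto simp: Let_def)
qed

end
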